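(* Let $\mathcal H$ be a real Hilbert space and $1\le p<2$. Let $J:\mathcal H\to\mathbb R\cup\{\infty\}$ be convex, lower semicontinuous, proper, with dense effective domain, and absolutely $p$-homogeneous ($J(cu)=|c|^pJ(u)$ for all $c\neq0$, $u\in\mathcal H$, and $J(0)=0$), and assume $\lambda_1:=\inf_{u\in\mathcal H_0}\frac{pJ(u)}{\|u\|^p}>0$. Let $f\in\mathcal H_0$ and let $u$ solve the gradient flow $\partial_t u+\partial J(u)\ni 0$, $u(0)=f$. Then the extinction time satisfies $$T_{\mathrm{ex}}\le \frac{\|f\|^{2-p}}{(2-p)\lambda_1}<\infty.$$
   Context: $\langle\cdot,\cdot\rangle$ and $\|\cdot\|$ denote the inner product and norm of $\mathcal H$. The subdifferential is $\partial J(u)=\{\zeta\in\mathcal H: J(u)+\langle\zeta,v-u\rangle\le J(v)\ \forall v\in\mathcal H\}$. $\mathcal N(J)=\{u:J(u)=0\}$ and $\mathcal H_0:=\mathcal N(J)^\perp\setminus\{0\}$. The gradient flow is understood in Brezis' sense: the unique continuous $u:[0,\infty)\to\mathcal H$, Lipschitz on $[\delta,\infty)$ for every $\delta>0$, right-differentiable on $(0,\infty)$, with $u(0)=f$ and $\partial_t^+u(t)=-\zeta(t)$, where $\zeta(t)$ is the minimal-norm element of $\partial J(u(t))$. The extinction time is $T_{\mathrm{ex}}:=\inf\{T>0: u(t)=0\ \forall t\ge T\}\in(0,\infty]$. *)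

theory Defs
  imports "HOL-Analysis.Analysis"
begin

text \<open>Functionals J : H -> R \<union> {\<infinity>} are modelled as maps into ereal never taking -\<infinity>.\<close>

definition proper_fun :: "('a \<Rightarrow> ereal) \<Rightarrow> bool" where
  "proper_fun J \<longleftrightarrow> (\<forall>u. J u \<noteq> -\<infinity>) \<and> (\<exists>u. J u \<noteq> \<infinity>)"

definition convex_fun :: "('a::real_vector \<Rightarrow> ereal) \<Rightarrow> bool" where
  "convex_fun J \<longleftrightarrow>
     (\<forall>x y t. 0 \<le> t \<and> t \<le> 1 \<longrightarrow>
        J ((1 - t) *\<^sub>R x + t *\<^sub>R y) \<le> ereal (1 - t) * J x + ereal t * J y)"

definition lsc_fun :: "('a::topological_space \<Rightarrow> ereal) \<Rightarrow> bool" where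
  "lsc_fun J \<longleftrightarrow> (\<forall>x. J x \<le> Liminf (at x) J)"

definition effective_domain :: "('a \<Rightarrow> ereal) \<Rightarrow> 'a set" where
  "effective_domain J = {u. J u \<noteq> \<infinity>}"

definition abs_p_homogeneous :: "real \<Rightarrow> ('a::real_vector \<Rightarrow> ereal) \<Rightarrow> bool" where
  "abs_p_homogeneous p J \<longleftrightarrow>
     (\<forall>c u. c \<noteq> 0 \<longrightarrow> J (c *\<^sub>R u) = ereal (\<bar>c\<bar> powr p) * J u) \<and> J 0 = 0"

definition subdiff :: "('a::real_inner \<Rightarrow> ereal) \<Rightarrow> 'a \<Rightarrow> 'a set" where
  "subdiff J u = {\<zeta>. \<forall>v. J u + ereal (inner \<zeta> (v - u)) \<le> J v}"

definition null_set :: "('a \<Rightarrow> ereal) \<Rightarrow> 'a set" where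
  "null_set J = {u. J u = 0}"

definition H0 :: "('a::real_inner \<Rightarrow> ereal) \<Rightarrow> 'a set" where
  "H0 J = orthogonal_comp (null_set J) - {0}"

definition lambda1 :: "real \<Rightarrow> ('a::real_inner \<Rightarrow> ereal) \<Rightarrow> ereal" where
  "lambda1 p J = (INF u \<in> H0 J. ereal p * J u / ereal (norm u powr p))"

definition min_norm_subgrad :: "('a::real_inner \<Rightarrow> ereal) \<Rightarrow> 'a \<Rightarrow> 'a \<Rightarrow> bool" where
  "min_norm_subgrad J u \<zeta> \<longleftrightarrow> \<zeta> \<in> subdiff J u \<and> (\<forall>\<eta> \<in> subdiff J u. norm \<zeta> \<le> norm \<eta>)"

text \<open>Gradient flow in Brezis' sense (u on [0,\<infinity>), values outside irrelevant).\<close>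
definition brezis_flow :: "('a::real_inner \<Rightarrow> ereal) \<Rightarrow> 'a \<Rightarrow> (real \<Rightarrow> 'a) \<Rightarrow> bool" where
  "brezis_flow J f u \<longleftrightarrow>
     continuous_on {0..} u \<and>
     (\<forall>\<delta>>0. \<exists>L. L-lipschitz_on {\<delta>..} u) \<and>
     u 0 = f \<and>
     (\<forall>t>0. \<exists>\<zeta>. min_norm_subgrad J (u t) \<zeta> \<and>
                 (u has_vector_derivative - \<zeta>) (at t within {t..}))"

definition extinction_time :: "(real \<Rightarrow> 'a::zero) \<Rightarrow> ereal" where
  "extinction_time u = Inf {ereal T | T. T > 0 \<and> (\<forall>t\<ge>T. u t = 0)}"

end

theory Submission
  imports Defs
begin

(* The subgradient \<zeta> driving the flow is orthogonal to N(J), so u(t) stays in N(J)^\<bottom>, and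
   p J(u) \<le> <\<zeta>, u> by Euler's inequality for p-homogeneous J. The definition of lambda_1 then
   gives lambda_1 |u|^p \<le> <\<zeta>, u>, hence
     d/dt |u|^(2-p) = -(2-p) |u|^(-p) <\<zeta>, u> \<le> -(2-p) lambda_1
   while u \<noteq> 0, so u must vanish before time |f|^(2-p) / ((2-p) lambda_1). The flow is only
   right-differentiable, so monotonicity is obtained from nonpositive right derivatives. *)

lemma closed_right_induction:
  fixes S :: "real set"
  assumes "closed S" and "a \<in> S" and "S \<subseteq> {a..b}"
    and step: "\<And>c. c \<in> S \<Longrightarrow> c < b \<Longrightarrow> eventually (\<lambda>y. y \<in> S) (at_right c)"
  shows "b \<in> S"
proof -
  have "bdd_above S"
    using bdd_above_Icc \<open>S \<subseteq> {a..b}\<close> by (rule bdd_above_mono)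
  with assms have "Sup S \<in> S"
    by (intro closed_contains_Sup) auto
  have "Sup S = b"
  proof (rule ccontr)
    assume "Sup S \<noteq> b"
    with \<open>Sup S \<in> S\<close> \<open>S \<subseteq> {a..b}\<close> have "Sup S < b"
      by fastforce
    then have "eventually (\<lambda>y. y \<in> S \<and> Sup S < y) (at_right (Sup S))"
      using step[OF \<open>Sup S \<in> S\<close>] eventually_at_right_less by (simp add: eventually_conj_iff)
    then obtain y where "y \<in> S" "Sup S < y"
      using eventually_happens'[OF trivial_limit_at_right_real] by blast
    with \<open>bdd_above S\<close> show False
      using cSup_upper by fastforce
  qed
  with \<open>Sup S \<in> S\<close> show ?thesis
    by simp
qed

lemma eventually_below_secant_at_right:
  fixes g :: "real \<Rightarrow> real"
  assumes "(g has_real_derivative D) (at_right c)" and "D < e"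
  shows "eventually (\<lambda>y. g y < g c + e * (y - c)) (at_right c)"
proof -
  have "((\<lambda>y. (g y - g c) / (y - c)) \<longlongrightarrow> D) (at_right c)"
    using assms(1) by (simp add: has_field_derivative_iff)
  then have "eventually (\<lambda>y. (g y - g c) / (y - c) < e) (at_right c)"
    using \<open>D < e\<close> by (rule order_tendstoD(2))
  with eventually_at_right_less[of c] show ?thesis
    by eventually_elim (simp add: divide_less_eq algebra_simps)
qed

lemma right_derivative_nonpos_imp_le_plus_linear:
  fixes g g' :: "real \<Rightarrow> real"
  assumes "a \<le> b" and cont: "continuous_on {a..b} g"
    and deriv: "\<And>t. a < t \<Longrightarrow> t < b \<Longrightarrow> (g has_real_derivative g' t) (at t within {t..})"
    and nonpos: "\<And>t. a < t \<Longrightarrow> t < b \<Longrightarrow> g' t \<le> 0"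
    and "0 < e"
  shows "g b \<le> g a + e * (b - a + 1)"
proof -
  \<comment> \<open>The extra offset e makes F a < 0, which handles the endpoint a where no derivative is assumed.\<close>
  define F where "F t = g t - g a - e * (t - a + 1)" for t
  have contF: "continuous_on {a..b} F"
    unfolding F_def by (intro continuous_intros cont)
  have "b \<in> {t \<in> {a..b}. F t \<le> 0}"
  proof (rule closed_right_induction)
    show "closed {t \<in> {a..b}. F t \<le> 0}"
      using continuous_on_closed_Collect_le[OF contF continuous_on_const, of 0] by simp
    show "a \<in> {t \<in> {a..b}. F t \<le> 0}"
      using \<open>a \<le> b\<close> \<open>0 < e\<close> by (simp add: F_def)
    fix c
    assume "c \<in> {t \<in> {a..b}. F t \<le> 0}" and "c < b"
    then have "a \<le> c" "F c \<le> 0"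
      by auto
    have "eventually (\<lambda>y. F y < 0) (at_right c)"
    proof (cases "c = a")
      case True
      have "(F \<longlongrightarrow> F a) (at_right a)"
        using contF \<open>c < b\<close> True by (simp add: continuous_on_def at_within_Icc_at_right[symmetric])
      moreover have "F a < 0"
        using \<open>0 < e\<close> by (simp add: F_def)
      ultimately show ?thesis
        using True by (metis order_tendstoD(2))
    next
      case False
      then have "(g has_real_derivative g' c) (at_right c)"
        using deriv \<open>a \<le> c\<close> \<open>c < b\<close> by (simp add: at_within_Ici_at_right[symmetric])
      moreover have "g' c < e"
        using nonpos[of c] False \<open>a \<le> c\<close> \<open>c < b\<close> \<open>0 < e\<close> by simp
      ultimately have "eventually (\<lambda>y. g y < g c + e * (y - c)) (at_right c)"
        by (rule eventually_below_secant_at_right)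
      then show ?thesis
        by eventually_elim (use \<open>F c \<le> 0\<close> in \<open>simp add: F_def algebra_simps\<close>)
    qed
    moreover have "eventually (\<lambda>y. c < y \<and> y < b) (at_right c)"
      using \<open>c < b\<close> by (simp add: eventually_at_right_field) blast
    ultimately show "eventually (\<lambda>y. y \<in> {t \<in> {a..b}. F t \<le> 0}) (at_right c)"
    proof eventually_elim
      case (elim y)
      with \<open>a \<le> c\<close> show ?case
        by simp
    qed
  qed auto
  then show ?thesis
    by (simp add: F_def)
qed

lemma right_derivative_nonpos_imp_nonincreasing:
  fixes g g' :: "real \<Rightarrow> real"
  assumes "a \<le> b" and "continuous_on {a..b} g"
    and "\<And>t. a < t \<Longrightarrow> t < b \<Longrightarrow> (g has_real_derivative g' t) (at t within {t..})"
    and "\<And>t. a < t \<Longrightarrow> t < b \<Longrightarrow> g' t \<le> 0"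
  shows "g b \<le> g a"
proof (rule field_le_epsilon)
  fix e :: real
  assume "0 < e"
  with \<open>a \<le> b\<close> have "0 < e / (b - a + 1)"
    by simp
  from right_derivative_nonpos_imp_le_plus_linear[OF assms this] \<open>a \<le> b\<close>
  show "g b \<le> g a + e"
    by simp
qed

lemma right_derivative_zero_imp_eq:
  fixes g :: "real \<Rightarrow> real"
  assumes "a \<le> b" and "continuous_on {a..b} g"
    and "\<And>t. a < t \<Longrightarrow> t < b \<Longrightarrow> (g has_real_derivative 0) (at t within {t..})"
  shows "g b = g a"
proof -
  have "g b \<le> g a"
    using assms by (rule right_derivative_nonpos_imp_nonincreasing) auto
  moreover have "- g b \<le> - g a"
  proof (rule right_derivative_nonpos_imp_nonincreasing[where g = "\<lambda>t. - g t" and g' = "\<lambda>_. 0"])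
    show "continuous_on {a..b} (\<lambda>t. - g t)"
      using assms(2) by (rule continuous_on_minus)
    show "((\<lambda>t. - g t) has_real_derivative 0) (at t within {t..})" if "a < t" "t < b" for t
      using DERIV_minus[OF assms(3)[OF that]] by simp
  qed (use assms(1) in simp_all)
  ultimately show ?thesis
    by simp
qed

lemma has_real_derivative_inner_self:
  assumes "(u has_vector_derivative v) (at t within S)"
  shows "((\<lambda>s. inner (u s) (u s)) has_real_derivative 2 * inner (u t) v) (at t within S)"
proof -
  have "(u has_derivative (\<lambda>h. h *\<^sub>R v)) (at t within S)"
    using assms by (simp add: has_vector_derivative_def)
  from has_derivative_inner[OF this this] show ?thesis
    by (rule has_derivative_imp_has_field_derivative) (simp add: inner_commute algebra_simps)
qed

lemma has_real_derivative_norm_powr: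
  assumes "(u has_vector_derivative v) (at t within S)" and "u t \<noteq> 0"
  shows "((\<lambda>s. norm (u s) powr r) has_real_derivative
           r * norm (u t) powr (r - 2) * inner (u t) v) (at t within S)"
proof -
  have "(u has_derivative (\<lambda>h. h *\<^sub>R v)) (at t within S)"
    using assms by (simp add: has_vector_derivative_def)
  from has_derivative_compose[OF this has_derivative_norm[OF \<open>u t \<noteq> 0\<close>]]
  have "((\<lambda>s. norm (u s)) has_real_derivative inner (u t) v / norm (u t)) (at t within S)"
    by (rule has_derivative_imp_has_field_derivative) (simp add: sgn_div_norm inner_commute divide_inverse)
  from DERIV_chain2[OF has_real_derivative_powr this] \<open>u t \<noteq> 0\<close> show ?thesis
    by (simp add: powr_diff power2_eq_square field_simps)
qed

lemma norm_powr_decay: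
  fixes u \<zeta> :: "real \<Rightarrow> 'a::real_inner"
  assumes "0 \<le> t" and "p < 2" and "continuous_on {0..t} u"
    and nonzero: "\<And>s. 0 \<le> s \<Longrightarrow> s \<le> t \<Longrightarrow> u s \<noteq> 0"
    and deriv: "\<And>s. 0 < s \<Longrightarrow> s < t \<Longrightarrow> (u has_vector_derivative - \<zeta> s) (at s within {s..})"
    and coercive: "\<And>s. 0 < s \<Longrightarrow> s < t \<Longrightarrow> L * norm (u s) powr p \<le> inner (\<zeta> s) (u s)"
  shows "norm (u t) powr (2 - p) + (2 - p) * L * t \<le> norm (u 0) powr (2 - p)"
proof -
  define G where "G s = norm (u s) powr (2 - p) + (2 - p) * L * s" for s
  have "G t \<le> G 0"
  proof (rule right_derivative_nonpos_imp_nonincreasing[OF \<open>0 \<le> t\<close>,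
        where g' = "\<lambda>s. (2 - p) * (L - norm (u s) powr (- p) * inner (\<zeta> s) (u s))"])
    show "continuous_on {0..t} G"
      unfolding G_def using assms(3) nonzero \<open>p < 2\<close> by (intro continuous_intros) auto
    fix s
    assume "0 < s" "s < t"
    then have "u s \<noteq> 0"
      using nonzero by simp
    from has_real_derivative_norm_powr[OF deriv[OF \<open>0 < s\<close> \<open>s < t\<close>] this, of "2 - p"]
    have "((\<lambda>s. norm (u s) powr (2 - p)) has_real_derivative
        (2 - p) * norm (u s) powr (- p) * inner (u s) (- \<zeta> s)) (at s within {s..})"
      by simp
    moreover have "((\<lambda>s. (2 - p) * L * s) has_real_derivative (2 - p) * L) (at s within {s..})"
      by (auto intro!: derivative_eq_intros)
    ultimately have "(G has_real_derivative
        (2 - p) * norm (u s) powr (- p) * inner (u s) (- \<zeta> s) + (2 - p) * L) (at s within {s..})"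
      unfolding G_def by (rule DERIV_add)
    then show "(G has_real_derivative (2 - p) * (L - norm (u s) powr (- p) * inner (\<zeta> s) (u s)))
        (at s within {s..})"
      by (simp add: algebra_simps inner_commute)
    from coercive[OF \<open>0 < s\<close> \<open>s < t\<close>] \<open>u s \<noteq> 0\<close>
    have "L \<le> norm (u s) powr (- p) * inner (\<zeta> s) (u s)"
      by (simp add: powr_minus field_simps)
    with \<open>p < 2\<close> show "(2 - p) * (L - norm (u s) powr (- p) * inner (\<zeta> s) (u s)) \<le> 0"
      by (simp add: mult_nonneg_nonpos)
  qed
  then show ?thesis
    by (simp add: G_def)
qed

lemma abs_p_homogeneous_uminus:
  assumes "abs_p_homogeneous p J"
  shows "J (- u) = J u"
proof -
  have "J ((- 1) *\<^sub>R u) = ereal (\<bar>- 1\<bar> powr p) * J u"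
    using assms unfolding abs_p_homogeneous_def by (metis neg_one_neq_zero)
  then show ?thesis
    by simp
qed

lemma convex_abs_p_homogeneous_nonneg:
  assumes "convex_fun J" and "abs_p_homogeneous p J"
  shows "0 \<le> J u"
proof -
  have "J ((1 - 1/2) *\<^sub>R u + (1/2) *\<^sub>R (- u)) \<le> ereal (1 - 1/2) * J u + ereal (1/2) * J (- u)"
    by (rule assms(1)[unfolded convex_fun_def, rule_format]) simp
  moreover have "(1 - 1/2) *\<^sub>R u + (1/2) *\<^sub>R (- u) = 0"
    by simp
  moreover have "J 0 = 0"
    using assms(2) by (simp add: abs_p_homogeneous_def)
  ultimately have "0 \<le> ereal (1/2) * J u + ereal (1/2) * J u"
    using abs_p_homogeneous_uminus[OF assms(2)] by (simp add: one_ereal_def)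
  then show ?thesis
    by (cases "J u") auto
qed

lemma proper_fun_subdiff_finite:
  assumes "proper_fun J" and "\<zeta> \<in> subdiff J u"
  obtains j where "J u = ereal j"
proof -
  obtain v where "J v \<noteq> \<infinity>"
    using assms(1) by (auto simp: proper_fun_def)
  moreover have "J u + ereal (inner \<zeta> (v - u)) \<le> J v"
    using assms(2) by (simp add: subdiff_def)
  moreover have "J u \<noteq> -\<infinity>"
    using assms(1) by (simp add: proper_fun_def)
  ultimately show ?thesis
    using that by (cases "J u") auto
qed

lemma subdiff_le_inner_self:
  assumes "J 0 = 0" and "\<zeta> \<in> subdiff J u"
  shows "J u \<le> ereal (inner \<zeta> u)"
proof -
  have "J u + ereal (inner \<zeta> (0 - u)) \<le> J 0"
    using assms(2) by (simp only: subdiff_def mem_Collect_eq)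
  with \<open>J 0 = 0\<close> show ?thesis
    by (cases "J u") auto
qed

text \<open>Test the subgradient inequality with c u for c \<up> 1, where (c^p - 1)/(c - 1) \<rightarrow> p.\<close>
lemma subdiff_euler_inequality:
  assumes hom: "abs_p_homogeneous p J" and "\<zeta> \<in> subdiff J u" and "J u = ereal j"
  shows "p * j \<le> inner \<zeta> u"
proof -
  have "eventually (\<lambda>c. (c powr p - 1) / (c - 1) * j \<le> inner \<zeta> u) (at_left 1)"
    using eventually_at_left_real[OF zero_less_one]
  proof eventually_elim
    case (elim c)
    have "J u + ereal (inner \<zeta> (c *\<^sub>R u - u)) \<le> J (c *\<^sub>R u)"
      using \<open>\<zeta> \<in> subdiff J u\<close> by (simp add: subdiff_def)
    moreover have "J (c *\<^sub>R u) = ereal (c powr p) * J u"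
      using hom elim unfolding abs_p_homogeneous_def by auto
    ultimately have "j + (c - 1) * inner \<zeta> u \<le> c powr p * j"
      using \<open>J u = ereal j\<close> by (simp add: algebra_simps)
    then have "(1 - c powr p) * j / (1 - c) \<le> inner \<zeta> u"
      using elim by (simp add: divide_le_eq algebra_simps)
    moreover have "(c powr p - 1) / (c - 1) = (1 - c powr p) / (1 - c)"
      by (metis minus_diff_eq minus_divide_divide)
    ultimately show ?case
      by simp
  qed
  moreover have "((\<lambda>c. (c powr p - 1) / (c - 1) * j) \<longlongrightarrow> p * j) (at_left 1)"
  proof -
    have "((\<lambda>c. c powr p) has_real_derivative p) (at 1)"
      using has_real_derivative_powr[of 1 p] by simp
    then have "((\<lambda>c. (c powr p - 1) / (c - 1)) \<longlongrightarrow> p) (at 1)"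
      by (simp add: has_field_derivative_iff)
    then show ?thesis
      by (intro tendsto_intros) (simp add: filterlim_at_split)
  qed
  ultimately show ?thesis
    by (intro tendsto_upperbound[OF _ _ trivial_limit_at_left_real])
qed

text \<open>Writing u + s n = (1 - t) (u / (1 - t)) + t (s n / t), convexity and J n = 0 give
  J (u + s n) \<le> (1 - t)^(1 - p) J u, which tends to J u as t \<down> 0. Hence s \<langle>\<zeta>, n\<rangle> \<le> 0
  for both s = 1 and s = -1.\<close>
lemma subdiff_orthogonal_null_set:
  assumes convex: "convex_fun J" and hom: "abs_p_homogeneous p J" and "proper_fun J"
    and subgrad: "\<zeta> \<in> subdiff J u" and "n \<in> null_set J"
  shows "inner \<zeta> n = 0"
proof -
  obtain j where "J u = ereal j"
    using \<open>proper_fun J\<close> subgrad by (rule proper_fun_subdiff_finite)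
  have "s * inner \<zeta> n \<le> 0" if "s = 1 \<or> s = -1" for s :: real
  proof -
    have "eventually (\<lambda>t. s * inner \<zeta> n \<le> (1 - t) * (1 / (1 - t)) powr p * j - j) (at_right 0)"
      using eventually_at_right_real[OF zero_less_one]
    proof eventually_elim
      case (elim t)
      have "J u + ereal (inner \<zeta> (s *\<^sub>R n)) = J u + ereal (inner \<zeta> ((u + s *\<^sub>R n) - u))"
        by simp
      also have "\<dots> \<le> J (u + s *\<^sub>R n)"
        using subgrad unfolding subdiff_def by blast
      also have "u + s *\<^sub>R n = (1 - t) *\<^sub>R ((1 / (1 - t)) *\<^sub>R u) + t *\<^sub>R ((s / t) *\<^sub>R n)"
        using elim by simp
      also have "J \<dots> \<le> ereal (1 - t) * J ((1 / (1 - t)) *\<^sub>R u) + ereal t * J ((s / t) *\<^sub>R n)"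
        using elim by (intro convex[unfolded convex_fun_def, rule_format]) simp
      also have "\<dots> = ereal ((1 - t) * (1 / (1 - t)) powr p * j)"
      proof -
        have "J ((1 / (1 - t)) *\<^sub>R u) = ereal ((1 / (1 - t)) powr p * j)"
          using hom elim \<open>J u = ereal j\<close> by (simp add: abs_p_homogeneous_def)
        moreover have "s / t \<noteq> 0"
          using that elim by auto
        then have "J ((s / t) *\<^sub>R n) = 0"
          using hom \<open>n \<in> null_set J\<close> by (simp add: abs_p_homogeneous_def null_set_def)
        ultimately show ?thesis
          by (simp add: mult.assoc)
      qed
      finally show ?case
        using \<open>J u = ereal j\<close> by simp
    qed
    moreover have "((\<lambda>t. (1 - t) * (1 / (1 - t)) powr p * j - j) \<longlongrightarrow> 0) (at_right 0)"
    proof -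
      have "((\<lambda>t. (1 - t) * (1 / (1 - t)) powr p * j - j) \<longlongrightarrow> (1 - 0) * (1 / (1 - 0)) powr p * j - j) (at_right 0)"
        by (intro tendsto_intros) auto
      then show ?thesis
        by simp
    qed
    ultimately show ?thesis
      by (intro tendsto_lowerbound[OF _ _ trivial_limit_at_right_real])
  qed
  from this[of 1] this[of "-1"] show ?thesis
    by simp
qed

lemma lambda1_le:
  assumes "u \<in> H0 J" and "J u = ereal j"
  shows "lambda1 p J \<le> ereal (p * j / norm u powr p)"
proof -
  have "lambda1 p J \<le> ereal p * J u / ereal (norm u powr p)"
    unfolding lambda1_def using assms(1) by (rule INF_lower)
  with assms show ?thesis
    by (simp add: H0_def)
qed

lemma lambda1_norm_powr_le_inner:
  assumes "abs_p_homogeneous p J" and "proper_fun J" and "lambda1 p J = ereal L"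
    and "u \<in> H0 J" and "\<zeta> \<in> subdiff J u"
  shows "L * norm u powr p \<le> inner \<zeta> u"
proof -
  obtain j where j: "J u = ereal j"
    using \<open>proper_fun J\<close> \<open>\<zeta> \<in> subdiff J u\<close> by (rule proper_fun_subdiff_finite)
  have "u \<noteq> 0"
    using \<open>u \<in> H0 J\<close> by (simp add: H0_def)
  from lambda1_le[OF \<open>u \<in> H0 J\<close> j, where p = p] \<open>u \<noteq> 0\<close> \<open>lambda1 p J = ereal L\<close>
  have "L * norm u powr p \<le> p * j"
    by (simp add: field_simps)
  also have "p * j \<le> inner \<zeta> u"
    using assms(1) \<open>\<zeta> \<in> subdiff J u\<close> j by (rule subdiff_euler_inequality)
  finally show ?thesis .
qed

lemma brezis_flowE:
  assumes "brezis_flow J f u"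
  obtains \<zeta> where "\<And>t. 0 < t \<Longrightarrow> \<zeta> t \<in> subdiff J (u t)"
    and "\<And>t. 0 < t \<Longrightarrow> (u has_vector_derivative - \<zeta> t) (at t within {t..})"
  using assms unfolding brezis_flow_def min_norm_subgrad_def by metis

lemma extinction_time_le:
  assumes "0 < T" and "\<And>t. T \<le> t \<Longrightarrow> u t = 0"
  shows "extinction_time u \<le> ereal T"
  unfolding extinction_time_def using assms by (intro Inf_lower) auto

context
  fixes J :: "'a::real_inner \<Rightarrow> ereal" and p :: real and f :: 'a and u :: "real \<Rightarrow> 'a"
  assumes convex: "convex_fun J" and hom: "abs_p_homogeneous p J" and proper: "proper_fun J"
    and flow: "brezis_flow J f u"
begin

lemma flow_continuous_on: "0 \<le> a \<Longrightarrow> continuous_on {a..b} u"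
  using flow unfolding brezis_flow_def by (auto elim: continuous_on_subset)

lemma flow_orthogonal_null_set:
  assumes "f \<in> orthogonal_comp (null_set J)" and "0 \<le> t"
  shows "u t \<in> orthogonal_comp (null_set J)"
proof -
  obtain \<zeta> where subgrad: "\<And>s. 0 < s \<Longrightarrow> \<zeta> s \<in> subdiff J (u s)"
    and deriv: "\<And>s. 0 < s \<Longrightarrow> (u has_vector_derivative - \<zeta> s) (at s within {s..})"
    using brezis_flowE[OF flow] by blast
  have "inner n (u t) = 0" if "n \<in> null_set J" for n
  proof -
    have "inner n (u t) = inner n (u 0)"
    proof (rule right_derivative_zero_imp_eq[OF \<open>0 \<le> t\<close>])
      show "continuous_on {0..t} (\<lambda>s. inner n (u s))"
        by (intro continuous_intros flow_continuous_on) simp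
      fix s
      assume "0 < s" "s < t"
      then have "inner (\<zeta> s) n = 0"
        using subdiff_orthogonal_null_set[OF convex hom proper subgrad that] by blast
      moreover have "((\<lambda>s. inner n (u s)) has_vector_derivative inner n (- \<zeta> s)) (at s within {s..})"
        using bounded_linear.has_vector_derivative[OF bounded_linear_inner_right deriv[OF \<open>0 < s\<close>]] .
      ultimately show "((\<lambda>s. inner n (u s)) has_real_derivative 0) (at s within {s..})"
        by (simp add: has_real_derivative_iff_has_vector_derivative inner_commute)
    qed
    also have "\<dots> = 0"
      using assms(1) that flow by (simp add: brezis_flow_def orthogonal_comp_def orthogonal_def)
    finally show ?thesis .
  qed
  then show ?thesis
    by (simp add: orthogonal_comp_def orthogonal_def)
qed

lemma flow_norm_antimono:
  assumes "0 \<le> s" and "s \<le> t"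
  shows "norm (u t) \<le> norm (u s)"
proof -
  obtain \<zeta> where subgrad: "\<And>x. 0 < x \<Longrightarrow> \<zeta> x \<in> subdiff J (u x)"
    and deriv: "\<And>x. 0 < x \<Longrightarrow> (u has_vector_derivative - \<zeta> x) (at x within {x..})"
    using brezis_flowE[OF flow] by blast
  have "inner (u t) (u t) \<le> inner (u s) (u s)"
  proof (rule right_derivative_nonpos_imp_nonincreasing[OF \<open>s \<le> t\<close>,
        where g' = "\<lambda>x. 2 * inner (u x) (- \<zeta> x)"])
    show "continuous_on {s..t} (\<lambda>x. inner (u x) (u x))"
      by (intro continuous_intros flow_continuous_on \<open>0 \<le> s\<close>)
    show "((\<lambda>x. inner (u x) (u x)) has_real_derivative 2 * inner (u x) (- \<zeta> x)) (at x within {x..})"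
      if "s < x" "x < t" for x
      using deriv that assms by (intro has_real_derivative_inner_self) simp
    show "2 * inner (u x) (- \<zeta> x) \<le> 0" if "s < x" "x < t" for x
    proof -
      have "0 \<le> J (u x)"
        by (rule convex_abs_p_homogeneous_nonneg[OF convex hom])
      also have "\<dots> \<le> ereal (inner (\<zeta> x) (u x))"
        using hom subgrad that assms by (intro subdiff_le_inner_self) (simp_all add: abs_p_homogeneous_def)
      finally show ?thesis
        by (simp add: inner_commute)
    qed
  qed
  then show ?thesis
    by (simp add: norm_le)
qed

lemma flow_lambda1_finite:
  assumes "f \<in> H0 J"
  shows "lambda1 p J \<noteq> \<infinity>"
proof -
  obtain \<zeta> where subgrad: "\<And>t. 0 < t \<Longrightarrow> \<zeta> t \<in> subdiff J (u t)"
    using brezis_flowE[OF flow] by blast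
  have "(u \<longlongrightarrow> f) (at_right 0)"
    using flow unfolding brezis_flow_def continuous_on_def at_within_Ici_at_right[symmetric]
    by fastforce
  then have "eventually (\<lambda>t. u t \<noteq> 0) (at_right 0)"
    using assms unfolding H0_def by (intro tendsto_imp_eventually_ne) auto
  then have "eventually (\<lambda>t. 0 < t \<and> u t \<noteq> 0) (at_right 0)"
    using eventually_at_right_less[of "0::real"] by (simp add: eventually_conj_iff)
  then obtain t where "0 < t" "u t \<noteq> 0"
    using eventually_happens'[OF trivial_limit_at_right_real] by blast
  then obtain j where j: "J (u t) = ereal j"
    using proper subgrad by (blast elim: proper_fun_subdiff_finite)
  have "u t \<in> H0 J"
    using assms flow_orthogonal_null_set[of t] \<open>0 < t\<close> \<open>u t \<noteq> 0\<close> by (simp add: H0_def)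
  from lambda1_le[OF this j, where p = p] show ?thesis
    by auto
qed

lemma flow_norm_powr_decay:
  assumes "f \<in> H0 J" and "p < 2" and "lambda1 p J = ereal L" and "0 \<le> t" and "u t \<noteq> 0"
  shows "norm (u t) powr (2 - p) + (2 - p) * L * t \<le> norm f powr (2 - p)"
proof -
  obtain \<zeta> where subgrad: "\<And>s. 0 < s \<Longrightarrow> \<zeta> s \<in> subdiff J (u s)"
    and deriv: "\<And>s. 0 < s \<Longrightarrow> (u has_vector_derivative - \<zeta> s) (at s within {s..})"
    using brezis_flowE[OF flow] by blast
  have nonzero: "u s \<noteq> 0" if "0 \<le> s" "s \<le> t" for s
    using flow_norm_antimono[OF that] \<open>u t \<noteq> 0\<close> by auto
  have "norm (u t) powr (2 - p) + (2 - p) * L * t \<le> norm (u 0) powr (2 - p)"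
  proof (rule norm_powr_decay[OF \<open>0 \<le> t\<close> \<open>p < 2\<close> flow_continuous_on nonzero])
    show "(u has_vector_derivative - \<zeta> s) (at s within {s..})" if "0 < s" for s
      using deriv that .
    show "L * norm (u s) powr p \<le> inner (\<zeta> s) (u s)" if "0 < s" "s < t" for s
    proof (rule lambda1_norm_powr_le_inner[OF hom proper \<open>lambda1 p J = ereal L\<close>])
      show "u s \<in> H0 J"
        using assms(1) flow_orthogonal_null_set[of s] nonzero[of s] that by (simp add: H0_def)
      show "\<zeta> s \<in> subdiff J (u s)"
        using subgrad that by simp
    qed
  qed simp_all
  then show ?thesis
    using flow by (simp add: brezis_flow_def)
qed

lemma flow_vanishes:
  assumes "f \<in> H0 J" and "p < 2" and "lambda1 p J = ereal L" and "0 \<le> t"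
    and "norm f powr (2 - p) \<le> (2 - p) * L * t"
  shows "u t = 0"
proof (rule ccontr)
  assume "u t \<noteq> 0"
  then have "0 < norm (u t) powr (2 - p)"
    by simp
  with flow_norm_powr_decay[OF assms(1-4) \<open>u t \<noteq> 0\<close>] assms(5) show False
    by linarith
qed

end

theorem theorem2:
  fixes J :: "'a::{real_inner, complete_space} \<Rightarrow> ereal"
    and p :: real and f :: 'a and u :: "real \<Rightarrow> 'a"
  assumes "1 \<le> p" "p < 2"
    and "convex_fun J" "lsc_fun J" "proper_fun J"
    and "closure (effective_domain J) = UNIV"
    and "abs_p_homogeneous p J"
    and "lambda1 p J > 0"
    and "f \<in> H0 J"
    and "brezis_flow J f u"
  shows "extinction_time u \<le> ereal (norm f powr (2 - p)) / (ereal (2 - p) * lambda1 p J)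
         \<and> extinction_time u < \<infinity>"
proof -
  \<comment> \<open>Lower semicontinuity, density of the domain and p \<ge> 1 matter for the existence of the
    flow, not for this estimate.\<close>
  note flow_assms = assms(3,7,5,10)
  obtain L where L: "lambda1 p J = ereal L" and "0 < L"
    using \<open>lambda1 p J > 0\<close> flow_lambda1_finite[OF flow_assms \<open>f \<in> H0 J\<close>]
    by (cases "lambda1 p J") auto
  define T where "T = norm f powr (2 - p) / ((2 - p) * L)"
  have "0 < T"
    using \<open>f \<in> H0 J\<close> \<open>0 < L\<close> \<open>p < 2\<close> by (simp add: T_def H0_def)
  have "u t = 0" if "T \<le> t" for t
  proof (rule flow_vanishes[OF flow_assms \<open>f \<in> H0 J\<close> \<open>p < 2\<close> L])
    show "0 \<le> t"
      using \<open>0 < T\<close> that by simp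
    show "norm f powr (2 - p) \<le> (2 - p) * L * t"
      using that \<open>0 < L\<close> \<open>p < 2\<close> by (simp add: T_def pos_divide_le_eq mult.commute)
  qed
  with \<open>0 < T\<close> have "extinction_time u \<le> ereal T"
    by (rule extinction_time_le)
  moreover have "ereal (norm f powr (2 - p)) / (ereal (2 - p) * lambda1 p J) = ereal T"
    using L \<open>0 < L\<close> \<open>p < 2\<close> by (simp add: T_def)
  ultimately show ?thesis
    using le_less_trans by fastforce
qed

end
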